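(* Let $n,m\ge 1$, let $A=(a_1,\ldots,a_m)$ be a real $n\times m$ matrix with $a_i\neq 0$ for all $i$, and let $b=(b_1,\ldots,b_m)^\top\in\mathbb{R}^m$ be such that $K=\{x\in\mathbb{R}^n \mid A^\top x\le b\}$ is nonempty. For $\varepsilon\ge 0$ put $b_i(\varepsilon)=b_i+\varepsilon^i$ (so $b_i(0)=b_i$), $H_i(\varepsilon)=\{x\mid a_i^\top x\le b_i(\varepsilon)\}$, $\partial H_i(\varepsilon)=\{x\mid a_i^\top x= b_i(\varepsilon)\}$, $K(\varepsilon)=\bigcap_{i=1}^m H_i(\varepsilon)$, $F_i(\varepsilon)=\partial H_i(\varepsilon)\cap K(\varepsilon)$, and $\mathcal{F}(\varepsilon)=\{J\subseteq\{1,\ldots,m\}\mid J\neq\emptyset,\ \bigcap_{i\in J}F_i(\varepsilon)\neq\emptyset\}$. Let $\mathcal{F}=\mathcal{F}(0)$, and let $\mathcal{F}(0+)$ denote the common value of $\mathcal{F}(\varepsilon)$ for all sufficiently small $\varepsilon>0$ (which is known to exist). Then $\mathcal{F}\supseteq\mathcal{F}(0+)$; consequently $|\mathcal{F}|\ge|\mathcal{F}(0+)|$. *)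

theory Defs
  imports "HOL-Analysis.Analysis"
begin

text \<open>Columns a_1..a_m of A are given as a function a indexed by 1..m,
vectors in R^n are real^'n. Perturbed right-hand side b_i(eps) = b_i + eps^i.\<close>

definition bpert :: "(nat \<Rightarrow> real) \<Rightarrow> real \<Rightarrow> nat \<Rightarrow> real" where
  "bpert b \<epsilon> i = b i + \<epsilon> ^ i"

definition Hsp :: "(nat \<Rightarrow> real^'n) \<Rightarrow> (nat \<Rightarrow> real) \<Rightarrow> real \<Rightarrow> nat \<Rightarrow> (real^'n) set" where
  "Hsp a b \<epsilon> i = {x. a i \<bullet> x \<le> bpert b \<epsilon> i}"

definition bdHsp :: "(nat \<Rightarrow> real^'n) \<Rightarrow> (nat \<Rightarrow> real) \<Rightarrow> real \<Rightarrow> nat \<Rightarrow> (real^'n) set" where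
  "bdHsp a b \<epsilon> i = {x. a i \<bullet> x = bpert b \<epsilon> i}"

definition Kpoly :: "nat \<Rightarrow> (nat \<Rightarrow> real^'n) \<Rightarrow> (nat \<Rightarrow> real) \<Rightarrow> real \<Rightarrow> (real^'n) set" where
  "Kpoly m a b \<epsilon> = (\<Inter>i\<in>{1..m}. Hsp a b \<epsilon> i)"

definition Face :: "nat \<Rightarrow> (nat \<Rightarrow> real^'n) \<Rightarrow> (nat \<Rightarrow> real) \<Rightarrow> real \<Rightarrow> nat \<Rightarrow> (real^'n) set" where
  "Face m a b \<epsilon> i = bdHsp a b \<epsilon> i \<inter> Kpoly m a b \<epsilon>"

definition FaceFam :: "nat \<Rightarrow> (nat \<Rightarrow> real^'n) \<Rightarrow> (nat \<Rightarrow> real) \<Rightarrow> real \<Rightarrow> nat set set" where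
  "FaceFam m a b \<epsilon> = {J. J \<subseteq> {1..m} \<and> J \<noteq> {} \<and> (\<Inter>i\<in>J. Face m a b \<epsilon> i) \<noteq> {}}"

end

theory Submission
  imports Defs
begin

text \<open>\<open>J \<in> \<F>(\<epsilon>)\<close> means that the system \<open>a\<^sub>i \<bullet> x = b\<^sub>i(\<epsilon>)\<close> (\<open>i \<in> J\<close>),
\<open>a\<^sub>j \<bullet> x \<le> b\<^sub>j(\<epsilon>)\<close> (all \<open>j\<close>) is solvable. If it is unsolvable at \<open>\<epsilon> = 0\<close>, Farkas' lemma
gives multipliers \<open>e\<close>, nonnegative off \<open>J\<close>, with \<open>\<Sum> e\<^sub>i a\<^sub>i = 0\<close> and \<open>\<Sum> e\<^sub>i b\<^sub>i(0) < 0\<close>.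
By continuity \<open>\<Sum> e\<^sub>i b\<^sub>i(\<epsilon>) < 0\<close> for small \<open>\<epsilon>\<close>, so the same certificate rules out
solvability there. Only continuity of \<open>b(\<epsilon>)\<close> is used.\<close>

lemma convex_cone_hull_signed_subset_combinations:
  fixes v :: "'i \<Rightarrow> 'a::real_vector"
  assumes "finite I" and "J \<subseteq> I"
    and "x \<in> convex_cone hull (v ` I \<union> (\<lambda>i. - v i) ` J)"
  shows "\<exists>e. (\<forall>i\<in>I - J. 0 \<le> e i) \<and> x = (\<Sum>i\<in>I. e i *\<^sub>R v i)"
proof -
  let ?C = "{(\<Sum>i\<in>I. e i *\<^sub>R v i) | e. \<forall>i\<in>I - J. 0 \<le> e i}"
  have unit: "(\<Sum>i\<in>I. (if i = j then c else 0) *\<^sub>R v i) = c *\<^sub>R v j" if "j \<in> I" for j c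
    using \<open>finite I\<close> that by (simp add: if_distrib[of "\<lambda>t. t *\<^sub>R _"] cong: if_cong)
  have gens: "v ` I \<union> (\<lambda>i. - v i) ` J \<subseteq> ?C"
  proof
    fix w assume "w \<in> v ` I \<union> (\<lambda>i. - v i) ` J"
    then consider j where "j \<in> I" "w = 1 *\<^sub>R v j" | j where "j \<in> J" "w = (-1) *\<^sub>R v j"
      by auto
    then show "w \<in> ?C"
    proof cases
      case 1
      then show ?thesis
        using unit[of j 1] by (intro CollectI exI[of _ "\<lambda>i. if i = j then 1 else 0"]) auto
    next
      case 2
      then show ?thesis
        using unit[of j "-1"] \<open>J \<subseteq> I\<close>
        by (intro CollectI exI[of _ "\<lambda>i. if i = j then -1 else 0"]) auto
    qed
  qed
  have "convex_cone ?C"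
    unfolding convex_cone_iff
  proof (intro conjI ballI allI impI)
    show "0 \<in> ?C" by (intro CollectI exI[of _ "\<lambda>i. 0"]) auto
  next
    fix y z assume "y \<in> ?C" "z \<in> ?C"
    then obtain e f where "y = (\<Sum>i\<in>I. e i *\<^sub>R v i)" "\<forall>i\<in>I - J. 0 \<le> e i"
      and "z = (\<Sum>i\<in>I. f i *\<^sub>R v i)" "\<forall>i\<in>I - J. 0 \<le> f i" by blast
    then show "y + z \<in> ?C"
      by (intro CollectI exI[of _ "\<lambda>i. e i + f i"]) (auto simp: scaleR_add_left sum.distrib)
  next
    fix y and c :: real assume "y \<in> ?C" "0 \<le> c"
    then obtain e where "y = (\<Sum>i\<in>I. e i *\<^sub>R v i)" "\<forall>i\<in>I - J. 0 \<le> e i" by blast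
    with \<open>0 \<le> c\<close> show "c *\<^sub>R y \<in> ?C"
      by (intro CollectI exI[of _ "\<lambda>i. c * e i"]) (auto simp: scaleR_sum_right)
  qed
  with gens have "convex_cone hull (v ` I \<union> (\<lambda>i. - v i) ` J) \<subseteq> ?C"
    by (rule hull_minimal)
  with assms(3) show ?thesis by blast
qed

lemma separating_hyperplane_closed_convex_cone:
  fixes C :: "'a::euclidean_space set"
  assumes "closed C" and "convex_cone C" and "p \<notin> C"
  obtains z where "z \<bullet> p < 0" and "\<And>w. w \<in> C \<Longrightarrow> 0 \<le> z \<bullet> w"
proof -
  have "convex C" using \<open>convex_cone C\<close> by (simp add: convex_cone_def)
  then obtain z \<beta> where zp: "z \<bullet> p < \<beta>" and zC: "\<forall>w\<in>C. \<beta> < z \<bullet> w"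
    using separating_hyperplane_closed_point[OF _ \<open>closed C\<close> \<open>p \<notin> C\<close>] by blast
  have "0 \<in> C" using \<open>convex_cone C\<close> by (simp add: convex_cone_contains_0)
  with zC have "\<beta> < 0" by auto
  have "0 \<le> z \<bullet> w" if "w \<in> C" for w
  proof (rule ccontr)
    assume "\<not> 0 \<le> z \<bullet> w"
    \<comment> \<open>Rescaling \<open>w\<close> into the half-space \<open>z \<bullet> _ = \<beta>\<close> contradicts strict separation.\<close>
    then have "(\<beta> / (z \<bullet> w)) *\<^sub>R w \<in> C"
      using \<open>convex_cone C\<close> \<open>w \<in> C\<close> \<open>\<beta> < 0\<close>
      by (intro conic_mul) (auto simp: convex_cone_def zero_le_divide_iff)
    with zC have "\<beta> < z \<bullet> ((\<beta> / (z \<bullet> w)) *\<^sub>R w)" by blast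
    with \<open>\<not> 0 \<le> z \<bullet> w\<close> show False by simp
  qed
  with zp \<open>\<beta> < 0\<close> show thesis using that by force
qed

lemma farkas_lemma_equalities_inequalities:
  fixes a :: "'i \<Rightarrow> 'a::euclidean_space" and c :: "'i \<Rightarrow> real"
  assumes "finite I" and "J \<subseteq> I"
    and infeasible: "\<nexists>x. (\<forall>i\<in>J. a i \<bullet> x = c i) \<and> (\<forall>i\<in>I. a i \<bullet> x \<le> c i)"
  shows "\<exists>e. (\<forall>i\<in>I - J. 0 \<le> e i) \<and> (\<Sum>i\<in>I. e i *\<^sub>R a i) = 0 \<and> (\<Sum>i\<in>I. e i * c i) = -1"
proof -
  define v where "v i = (a i, c i)" for i
  define C where "C = convex_cone hull (v ` I \<union> (\<lambda>i. - v i) ` J)"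
  have v_in: "v i \<in> C" if "i \<in> I" for i
    using that unfolding C_def by (intro hull_inc) auto
  have neg_v_in: "- v i \<in> C" if "i \<in> J" for i
    using that unfolding C_def by (intro hull_inc) auto
  have "closed C"
    unfolding C_def using \<open>finite I\<close> \<open>J \<subseteq> I\<close> finite_subset
    by (intro closed_convex_cone_hull) auto
  have "convex_cone C"
    unfolding C_def by (rule convex_cone_convex_cone_hull)
  have "(0, -1) \<in> C"
  proof (rule ccontr)
    assume "(0, -1) \<notin> C"
    with \<open>closed C\<close> \<open>convex_cone C\<close> obtain z
      where z0: "z \<bullet> (0, -1) < 0" and zC: "\<And>w. w \<in> C \<Longrightarrow> 0 \<le> z \<bullet> w"
      using separating_hyperplane_closed_convex_cone by blast
    obtain y s where z: "z = (y, s)" by (cases z)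
    have "0 < s" using z0 by (simp add: z inner_Pair)
    \<comment> \<open>The separating functional \<open>(y, s)\<close> yields the solution \<open>x = - y / s\<close>.\<close>
    define x where "x = (- 1 / s) *\<^sub>R y"
    have sol: "a i \<bullet> x \<le> c i \<longleftrightarrow> 0 \<le> y \<bullet> a i + s * c i" for i
      using \<open>0 < s\<close> unfolding x_def by (auto simp: inner_commute field_simps)
    have "a i \<bullet> x \<le> c i" if "i \<in> I" for i
      using zC[OF v_in[OF that]] by (simp add: sol z v_def inner_Pair)
    moreover have "a i \<bullet> x = c i" if "i \<in> J" for i
    proof -
      have "0 \<le> y \<bullet> a i + s * c i" "0 \<le> - (y \<bullet> a i + s * c i)"
        using zC[OF v_in] zC[OF neg_v_in[OF that]] that \<open>J \<subseteq> I\<close>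
        by (auto simp: z v_def inner_Pair)
      then have "y \<bullet> a i + s * c i = 0" by simp
      with \<open>0 < s\<close> show ?thesis unfolding x_def by (simp add: inner_commute field_simps)
    qed
    ultimately show False using infeasible by blast
  qed
  then obtain e where e: "(0, -1) = (\<Sum>i\<in>I. e i *\<^sub>R v i)" "\<forall>i\<in>I - J. 0 \<le> e i"
    using convex_cone_hull_signed_subset_combinations[OF \<open>finite I\<close> \<open>J \<subseteq> I\<close>]
    unfolding C_def by blast
  from arg_cong[OF e(1), of fst] arg_cong[OF e(1), of snd]
  have "(\<Sum>i\<in>I. e i *\<^sub>R a i) = 0" "(\<Sum>i\<in>I. e i * c i) = -1"
    by (simp_all add: fst_sum snd_sum v_def)
  with e(2) show ?thesis by blast
qed

lemma farkas_certificate_nonneg: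
  fixes a :: "'i \<Rightarrow> 'a::real_inner"
  assumes "\<forall>i\<in>I - J. 0 \<le> e i" and "(\<Sum>i\<in>I. e i *\<^sub>R a i) = 0"
    and "\<forall>i\<in>J. a i \<bullet> x = c i" and "\<forall>i\<in>I. a i \<bullet> x \<le> c i"
  shows "0 \<le> (\<Sum>i\<in>I. e i * c i)"
proof -
  have "0 = (\<Sum>i\<in>I. e i *\<^sub>R a i) \<bullet> x" using assms(2) by simp
  also have "\<dots> = (\<Sum>i\<in>I. e i * (a i \<bullet> x))" by (simp add: inner_sum_left)
  also have "\<dots> \<le> (\<Sum>i\<in>I. e i * c i)"
    using assms(1,3,4) by (intro sum_mono) (metis DiffI mult_left_mono order_refl)
  finally show ?thesis .
qed

lemma linear_system_solvable_limit:
  fixes a :: "'i \<Rightarrow> 'a::euclidean_space" and c :: "'b \<Rightarrow> 'i \<Rightarrow> real"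
  assumes "finite I" and "J \<subseteq> I" and "F \<noteq> bot"
    and lim: "\<And>i. i \<in> I \<Longrightarrow> ((\<lambda>t. c t i) \<longlongrightarrow> c0 i) F"
    and solvable: "eventually (\<lambda>t. \<exists>x. (\<forall>i\<in>J. a i \<bullet> x = c t i) \<and> (\<forall>i\<in>I. a i \<bullet> x \<le> c t i)) F"
  shows "\<exists>x. (\<forall>i\<in>J. a i \<bullet> x = c0 i) \<and> (\<forall>i\<in>I. a i \<bullet> x \<le> c0 i)"
proof (rule ccontr)
  assume "\<nexists>x. (\<forall>i\<in>J. a i \<bullet> x = c0 i) \<and> (\<forall>i\<in>I. a i \<bullet> x \<le> c0 i)"
  then obtain e where e: "\<forall>i\<in>I - J. 0 \<le> e i" "(\<Sum>i\<in>I. e i *\<^sub>R a i) = 0"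
    and e_c0: "(\<Sum>i\<in>I. e i * c0 i) = -1"
    using farkas_lemma_equalities_inequalities[OF \<open>finite I\<close> \<open>J \<subseteq> I\<close>] by blast
  have "((\<lambda>t. \<Sum>i\<in>I. e i * c t i) \<longlongrightarrow> -1) F"
    unfolding e_c0[symmetric] using lim by (intro tendsto_intros)
  then have "eventually (\<lambda>t. (\<Sum>i\<in>I. e i * c t i) < 0) F"
    by (rule order_tendstoD) simp
  moreover have "eventually (\<lambda>t. 0 \<le> (\<Sum>i\<in>I. e i * c t i)) F"
    using solvable by eventually_elim (use e farkas_certificate_nonneg in blast)
  ultimately have "eventually (\<lambda>t. False) F" by eventually_elim simp
  with \<open>F \<noteq> bot\<close> show False by simp
qed

lemma FaceFam_iff:
  "J \<in> FaceFam m a b \<epsilon> \<longleftrightarrow> J \<subseteq> {1..m} \<and> J \<noteq> {} \<and>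
     (\<exists>x. (\<forall>i\<in>J. a i \<bullet> x = bpert b \<epsilon> i) \<and> (\<forall>i\<in>{1..m}. a i \<bullet> x \<le> bpert b \<epsilon> i))"
  unfolding FaceFam_def Face_def bdHsp_def Kpoly_def Hsp_def by blast

lemma FaceFam_at_right_0_imp_FaceFam_0:
  assumes "eventually (\<lambda>\<epsilon>. J \<in> FaceFam m a b \<epsilon>) (at_right 0)"
  shows "J \<in> FaceFam m a b 0"
proof -
  from eventually_happens'[OF trivial_limit_at_right_real assms]
  have J: "J \<subseteq> {1..m}" "J \<noteq> {}" by (auto simp: FaceFam_iff)
  have "((\<lambda>\<epsilon>. bpert b \<epsilon> i) \<longlongrightarrow> bpert b 0 i) (at_right 0)" for i
    unfolding bpert_def by (intro tendsto_intros)
  moreover have "eventually (\<lambda>\<epsilon>. \<exists>x. (\<forall>i\<in>J. a i \<bullet> x = bpert b \<epsilon> i)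
      \<and> (\<forall>i\<in>{1..m}. a i \<bullet> x \<le> bpert b \<epsilon> i)) (at_right 0)"
    using assms by eventually_elim (simp add: FaceFam_iff)
  ultimately have "\<exists>x. (\<forall>i\<in>J. a i \<bullet> x = bpert b 0 i) \<and> (\<forall>i\<in>{1..m}. a i \<bullet> x \<le> bpert b 0 i)"
    by (intro linear_system_solvable_limit[OF _ J(1) trivial_limit_at_right_real]) auto
  with J show ?thesis by (simp add: FaceFam_iff)
qed

theorem lemma2:
  fixes m :: nat and a :: "nat \<Rightarrow> real^'n" and b :: "nat \<Rightarrow> real"
    and G :: "nat set set"
  assumes "m \<ge> 1"
    and "\<And>i. i \<in> {1..m} \<Longrightarrow> a i \<noteq> 0"
    and "Kpoly m a b 0 \<noteq> {}"
    and "eventually (\<lambda>\<epsilon>. FaceFam m a b \<epsilon> = G) (at_right 0)"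
  shows "G \<subseteq> FaceFam m a b 0 \<and> card G \<le> card (FaceFam m a b 0)"
proof -
  have sub: "G \<subseteq> FaceFam m a b 0"
  proof
    fix J assume "J \<in> G"
    have "eventually (\<lambda>\<epsilon>. J \<in> FaceFam m a b \<epsilon>) (at_right 0)"
      using assms(4) by (rule eventually_mono) (simp add: \<open>J \<in> G\<close>)
    then show "J \<in> FaceFam m a b 0" by (rule FaceFam_at_right_0_imp_FaceFam_0)
  qed
  have "finite (FaceFam m a b 0)"
    by (rule finite_subset[of _ "Pow {1..m}"]) (auto simp: FaceFam_def)
  with sub show ?thesis using card_mono by blast
qed

end
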